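(* Let $\Delta$ be a simplicial complex on $[n]$ with $\dim\Delta\le n-3$, and let $U_{\bar\sigma}$ be a subspace in $L_\Delta$ for some face $\sigma$ of $\Delta$, where $\bar\sigma=[n]-\sigma$. Then the lower interval $[\hat0,U_{\bar\sigma}]$ of $L_\Delta$ is isomorphic to the intersection lattice of the diagonal arrangement $\mathcal{A}_{\mathrm{link}_\Delta\sigma}$ associated to $\mathrm{link}_\Delta\sigma$, regarded as a simplicial complex on the vertex set $\bar\sigma$ (so the arrangement lives in $\mathbb{R}^{\bar\sigma}$).
   Context: For a finite set $V$ and $S\subseteq V$, $U_S=\{u\in\mathbb{R}^V:u_i=u_j\ \forall i,j\in S\}$. For a simplicial complex $\Gamma$ on $V$, $\mathcal{A}_\Gamma=\{U_{V-F}:F\text{ facet of }\Gamma\}$ and its intersection lattice is the set of all intersections of members of $\mathcal{A}_\Gamma$ (including $\mathbb{R}^V$), ordered by reverse inclusion; $L_\Delta$ is this lattice for $\Delta$ on $[n]$. $\mathrm{link}_\Delta\sigma=\{\tau\in\Delta:\tau\cap\sigma=\emptyset,\ \tau\cup\sigma\in\Delta\}$. *)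

theory Defs
  imports Complex_Main
begin

text \<open>Vectors in R^V, for a finite set V of type 'a, are represented as functions
  'a => real vanishing outside V.\<close>
definition RV :: "'a set \<Rightarrow> ('a \<Rightarrow> real) set" where
  "RV V = {u. \<forall>i. i \<notin> V \<longrightarrow> u i = 0}"

definition USub :: "'a set \<Rightarrow> 'a set \<Rightarrow> ('a \<Rightarrow> real) set" where
  "USub V S = {u \<in> RV V. \<forall>i\<in>S. \<forall>j\<in>S. u i = u j}"

definition simplicial_complex :: "'a set \<Rightarrow> 'a set set \<Rightarrow> bool" where
  "simplicial_complex V \<Gamma> \<longleftrightarrow> (\<forall>F\<in>\<Gamma>. F \<subseteq> V) \<and> (\<forall>F\<in>\<Gamma>. \<forall>G. G \<subseteq> F \<longrightarrow> G \<in> \<Gamma>)"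

definition facets :: "'a set set \<Rightarrow> 'a set set" where
  "facets \<Gamma> = {F \<in> \<Gamma>. \<forall>G\<in>\<Gamma>. F \<subseteq> G \<longrightarrow> G = F}"

definition diag_arr :: "'a set \<Rightarrow> 'a set set \<Rightarrow> ('a \<Rightarrow> real) set set" where
  "diag_arr V \<Gamma> = {USub V (V - F) | F. F \<in> facets \<Gamma>}"

text \<open>Intersection lattice: all intersections of subfamilies of A_Gamma (the empty
  intersection being R^V), ordered by reverse inclusion.\<close>
definition int_lattice :: "'a set \<Rightarrow> 'a set set \<Rightarrow> ('a \<Rightarrow> real) set set" where
  "int_lattice V \<Gamma> = {RV V \<inter> \<Inter>\<S> | \<S>. \<S> \<subseteq> diag_arr V \<Gamma>}"

definition link :: "'a set set \<Rightarrow> 'a set \<Rightarrow> 'a set set" where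
  "link \<Delta> \<sigma> = {\<tau> \<in> \<Delta>. \<tau> \<inter> \<sigma> = {} \<and> \<tau> \<union> \<sigma> \<in> \<Delta>}"

definition rev_incl_iso :: "'b set set \<Rightarrow> 'c set set \<Rightarrow> bool" where
  "rev_incl_iso P Q \<longleftrightarrow> (\<exists>f. bij_betw f P Q \<and>
      (\<forall>X\<in>P. \<forall>Y\<in>P. X \<supseteq> Y \<longleftrightarrow> f X \<supseteq> f Y))"

end

theory Submission
  imports Defs
begin

text \<open>Every element of L_\<Delta> is cut out by the equalities on a family of blocks V - F, F a
  facet. By the dimension bound every block has at least two points, so U_(V-\<sigma>) \<subseteq> U_(V-F)
  forces V - F \<subseteq> V - \<sigma>: a unit vector at a point of \<sigma> - F would separate the block. Hence
  the elements above U_(V-\<sigma>) are those whose blocks come from facets containing \<sigma>, and these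
  blocks are exactly the blocks (V - \<sigma>) - \<tau> of the facets \<tau> of the link. Intersecting with
  R^(V-\<sigma>) maps the one family of subspaces onto the other, and it reflects inclusion because
  membership in a diagonal subspace whose blocks lie in V - \<sigma> only depends on the coordinates
  in V - \<sigma>.\<close>

definition diag_subspace :: "'a set \<Rightarrow> 'a set set \<Rightarrow> ('a \<Rightarrow> real) set" where
  "diag_subspace V Bs = RV V \<inter> (\<Inter>B\<in>Bs. USub V B)"

lemma RV_mono: "W \<subseteq> V \<Longrightarrow> RV W \<subseteq> RV V"
  by (auto simp: RV_def)

lemma USub_subset_RV: "USub V B \<subseteq> RV V"
  by (auto simp: USub_def)

lemma USub_antimono: "A \<subseteq> B \<Longrightarrow> USub V B \<subseteq> USub V A"
  by (auto simp: USub_def)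

lemma subset_of_USub_subset_USub:
  assumes sub: "USub V A \<subseteq> USub V B" and "B \<subseteq> V" and card: "2 \<le> card B"
  shows "B \<subseteq> A"
proof (rule ccontr)
  assume "\<not> B \<subseteq> A"
  then obtain j where j: "j \<in> B" "j \<notin> A" by blast
  have "\<not> B \<subseteq> {j}"
    using card card_mono[of "{j}" B] by auto
  then obtain k where k: "k \<in> B" "k \<noteq> j" by blast
  define u where "u = (\<lambda>i. if i = j then 1 else 0 :: real)"
  have "u \<in> USub V A"
    using j \<open>B \<subseteq> V\<close> by (auto simp: USub_def RV_def u_def)
  then have "u j = u k"
    using sub j k unfolding USub_def by blast
  then show False
    using k by (simp add: u_def)
qed

lemma int_lattice_eq_diag_subspace:
  "int_lattice V \<Gamma> = diag_subspace V ` Pow ((\<lambda>F. V - F) ` facets \<Gamma>)"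
proof -
  let ?\<B> = "(\<lambda>F. V - F) ` facets \<Gamma>"
  have "diag_arr V \<Gamma> = USub V ` ?\<B>"
    by (auto simp: diag_arr_def)
  then have "int_lattice V \<Gamma> = (\<lambda>\<S>. RV V \<inter> \<Inter>\<S>) ` Pow (USub V ` ?\<B>)"
    by (auto simp: int_lattice_def)
  also have "Pow (USub V ` ?\<B>) = image (USub V) ` Pow ?\<B>"
    by (rule image_Pow_surj[symmetric]) (rule refl)
  finally show ?thesis
    by (simp add: image_image diag_subspace_def)
qed

lemma USub_subset_diag_subspace_iff:
  "USub V A \<subseteq> diag_subspace V Bs \<longleftrightarrow> (\<forall>B\<in>Bs. USub V A \<subseteq> USub V B)"
  using USub_subset_RV[of V A] by (auto simp: diag_subspace_def)

lemma diag_subspace_above_USub: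
  assumes "\<And>B. B \<in> \<B> \<Longrightarrow> B \<subseteq> V \<and> 2 \<le> card B"
  shows "{X \<in> diag_subspace V ` Pow \<B>. USub V A \<subseteq> X} = diag_subspace V ` Pow {B \<in> \<B>. B \<subseteq> A}"
proof -
  have above_iff: "USub V A \<subseteq> diag_subspace V Bs \<longleftrightarrow> Bs \<subseteq> {B \<in> \<B>. B \<subseteq> A}" if "Bs \<subseteq> \<B>" for Bs
  proof -
    have "USub V A \<subseteq> USub V B \<longleftrightarrow> B \<subseteq> A" if "B \<in> \<B>" for B
      using that assms subset_of_USub_subset_USub USub_antimono by metis
    then show ?thesis
      unfolding USub_subset_diag_subspace_iff using that by auto
  qed
  show ?thesis
  proof (intro equalityI subsetI)
    fix X assume "X \<in> {X \<in> diag_subspace V ` Pow \<B>. USub V A \<subseteq> X}"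
    then obtain Bs where "Bs \<subseteq> \<B>" "X = diag_subspace V Bs" "USub V A \<subseteq> X"
      by blast
    then show "X \<in> diag_subspace V ` Pow {B \<in> \<B>. B \<subseteq> A}"
      using above_iff[of Bs] by blast
  next
    fix X assume "X \<in> diag_subspace V ` Pow {B \<in> \<B>. B \<subseteq> A}"
    then obtain Bs where "Bs \<subseteq> {B \<in> \<B>. B \<subseteq> A}" "X = diag_subspace V Bs"
      by blast
    then show "X \<in> {X \<in> diag_subspace V ` Pow \<B>. USub V A \<subseteq> X}"
      using above_iff[of Bs] by blast
  qed
qed

lemma diag_subspace_Int_RV:
  assumes "W \<subseteq> V"
  shows "diag_subspace V Bs \<inter> RV W = diag_subspace W Bs"
  using RV_mono[OF assms] unfolding diag_subspace_def USub_def by blast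

lemma diag_subspace_cong:
  assumes "u \<in> RV V" "v \<in> RV V" "\<And>B i. B \<in> Bs \<Longrightarrow> i \<in> B \<Longrightarrow> u i = v i"
  shows "u \<in> diag_subspace V Bs \<longleftrightarrow> v \<in> diag_subspace V Bs"
  using assms by (auto simp: diag_subspace_def USub_def)

lemma diag_subspace_subset_iff_restrict:
  assumes "W \<subseteq> V" "\<Union>Bs \<subseteq> W" "\<Union>Cs \<subseteq> W"
  shows "diag_subspace V Bs \<subseteq> diag_subspace V Cs \<longleftrightarrow> diag_subspace W Bs \<subseteq> diag_subspace W Cs"
proof
  assume "diag_subspace V Bs \<subseteq> diag_subspace V Cs"
  then show "diag_subspace W Bs \<subseteq> diag_subspace W Cs"
    using diag_subspace_Int_RV[OF \<open>W \<subseteq> V\<close>] by blast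
next
  assume sub: "diag_subspace W Bs \<subseteq> diag_subspace W Cs"
  show "diag_subspace V Bs \<subseteq> diag_subspace V Cs"
  proof
    fix u assume u: "u \<in> diag_subspace V Bs"
    define v where "v = (\<lambda>i. if i \<in> W then u i else 0)"
    have uV: "u \<in> RV V" and vW: "v \<in> RV W" and vV: "v \<in> RV V"
      using u \<open>W \<subseteq> V\<close> by (auto simp: diag_subspace_def RV_def v_def)
    have agree: "u i = v i" if "i \<in> \<Union>Bs \<union> \<Union>Cs" for i
      using that assms by (auto simp: v_def)
    have "v \<in> diag_subspace V Bs"
      using diag_subspace_cong[OF uV vV, of Bs] agree u by blast
    then have "v \<in> diag_subspace V Cs"
      using sub vW diag_subspace_Int_RV[OF \<open>W \<subseteq> V\<close>] by blast
    then show "u \<in> diag_subspace V Cs"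
      using diag_subspace_cong[OF uV vV, of Cs] agree by blast
  qed
qed

lemma rev_incl_isoI:
  assumes "f ` P = Q" and "\<And>X Y. X \<in> P \<Longrightarrow> Y \<in> P \<Longrightarrow> Y \<subseteq> X \<longleftrightarrow> f Y \<subseteq> f X"
  shows "rev_incl_iso P Q"
proof -
  have "inj_on f P"
    using assms(2) by (intro inj_onI) (metis subset_antisym order_refl)
  then show ?thesis
    using assms unfolding rev_incl_iso_def bij_betw_def by blast
qed

lemma rev_incl_iso_diag_subspace_restrict:
  assumes "W \<subseteq> V" "\<Union>\<B> \<subseteq> W"
  shows "rev_incl_iso (diag_subspace V ` Pow \<B>) (diag_subspace W ` Pow \<B>)"
proof (rule rev_incl_isoI[where f = "\<lambda>X. X \<inter> RV W"])
  show "(\<lambda>X. X \<inter> RV W) ` diag_subspace V ` Pow \<B> = diag_subspace W ` Pow \<B>"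
    using diag_subspace_Int_RV[OF \<open>W \<subseteq> V\<close>] by (simp add: image_image)
next
  fix X Y assume "X \<in> diag_subspace V ` Pow \<B>" "Y \<in> diag_subspace V ` Pow \<B>"
  then obtain Bs Cs where "Bs \<subseteq> \<B>" "Cs \<subseteq> \<B>"
    and X: "X = diag_subspace V Bs" and Y: "Y = diag_subspace V Cs"
    by blast
  then have "\<Union>Cs \<subseteq> W" "\<Union>Bs \<subseteq> W"
    using assms(2) by auto
  then show "Y \<subseteq> X \<longleftrightarrow> Y \<inter> RV W \<subseteq> X \<inter> RV W"
    unfolding X Y diag_subspace_Int_RV[OF \<open>W \<subseteq> V\<close>]
    by (rule diag_subspace_subset_iff_restrict[OF \<open>W \<subseteq> V\<close>])
qed

lemma facets_link_iff:
  assumes "simplicial_complex V \<Delta>"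
  shows "\<tau> \<in> facets (link \<Delta> \<sigma>) \<longleftrightarrow> \<tau> \<inter> \<sigma> = {} \<and> \<tau> \<union> \<sigma> \<in> facets \<Delta>"
proof -
  have down: "\<And>F G. F \<in> \<Delta> \<Longrightarrow> G \<subseteq> F \<Longrightarrow> G \<in> \<Delta>"
    using assms by (auto simp: simplicial_complex_def)
  show ?thesis
  proof
    assume \<tau>: "\<tau> \<in> facets (link \<Delta> \<sigma>)"
    then have \<tau>_link: "\<tau> \<inter> \<sigma> = {}" "\<tau> \<union> \<sigma> \<in> \<Delta>"
      unfolding facets_def link_def by blast+
    have maximal: "G = \<tau> \<union> \<sigma>" if G: "G \<in> \<Delta>" "\<tau> \<union> \<sigma> \<subseteq> G" for G
    proof -
      have "(G - \<sigma>) \<union> \<sigma> = G"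
        using G by blast
      then have "G - \<sigma> \<in> link \<Delta> \<sigma>"
        using G down[of G "G - \<sigma>"] unfolding link_def by auto
      moreover have "\<tau> \<subseteq> G - \<sigma>"
        using G \<tau>_link by blast
      ultimately have "G - \<sigma> = \<tau>"
        using \<tau> unfolding facets_def by blast
      then show ?thesis
        using G by blast
    qed
    show "\<tau> \<inter> \<sigma> = {} \<and> \<tau> \<union> \<sigma> \<in> facets \<Delta>"
      using \<tau>_link maximal unfolding facets_def by blast
  next
    assume \<tau>: "\<tau> \<inter> \<sigma> = {} \<and> \<tau> \<union> \<sigma> \<in> facets \<Delta>"
    then have "\<tau> \<in> link \<Delta> \<sigma>"
      using down[of "\<tau> \<union> \<sigma>" \<tau>] unfolding link_def facets_def by blast
    moreover have "G = \<tau>" if G: "G \<in> link \<Delta> \<sigma>" "\<tau> \<subseteq> G" for G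
    proof -
      have "G \<union> \<sigma> \<in> \<Delta>" "\<tau> \<union> \<sigma> \<subseteq> G \<union> \<sigma>" "G \<inter> \<sigma> = {}"
        using G unfolding link_def by blast+
      then have "G \<union> \<sigma> = \<tau> \<union> \<sigma>"
        using \<tau> unfolding facets_def by blast
      then show ?thesis
        using \<tau> \<open>G \<inter> \<sigma> = {}\<close> by blast
    qed
    ultimately show "\<tau> \<in> facets (link \<Delta> \<sigma>)"
      unfolding facets_def by blast
  qed
qed

lemma blocks_facets_link:
  assumes "simplicial_complex V \<Delta>"
  shows "(\<lambda>\<tau>. (V - \<sigma>) - \<tau>) ` facets (link \<Delta> \<sigma>) = (\<lambda>F. V - F) ` {F \<in> facets \<Delta>. \<sigma> \<subseteq> F}"
proof -
  have "facets (link \<Delta> \<sigma>) = (\<lambda>F. F - \<sigma>) ` {F \<in> facets \<Delta>. \<sigma> \<subseteq> F}"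
  proof (intro equalityI subsetI)
    fix \<tau> assume "\<tau> \<in> facets (link \<Delta> \<sigma>)"
    then have "\<tau> \<inter> \<sigma> = {}" "\<tau> \<union> \<sigma> \<in> facets \<Delta>"
      using facets_link_iff[OF assms] by blast+
    then show "\<tau> \<in> (\<lambda>F. F - \<sigma>) ` {F \<in> facets \<Delta>. \<sigma> \<subseteq> F}"
      by (intro image_eqI[of _ _ "\<tau> \<union> \<sigma>"]) auto
  next
    fix \<tau> assume "\<tau> \<in> (\<lambda>F. F - \<sigma>) ` {F \<in> facets \<Delta>. \<sigma> \<subseteq> F}"
    then obtain F where "F \<in> facets \<Delta>" "\<sigma> \<subseteq> F" "\<tau> = F - \<sigma>"
      by blast
    moreover have "(F - \<sigma>) \<union> \<sigma> = F"
      using \<open>\<sigma> \<subseteq> F\<close> by blast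
    ultimately show "\<tau> \<in> facets (link \<Delta> \<sigma>)"
      using facets_link_iff[OF assms] by auto
  qed
  moreover have "(V - \<sigma>) - (F - \<sigma>) = V - F" if "\<sigma> \<subseteq> F" for F
    using that by blast
  ultimately show ?thesis
    by (simp add: image_image)
qed

theorem lemma4p5:
  fixes n :: nat and \<Delta> :: "nat set set" and \<sigma> :: "nat set"
  assumes cx: "simplicial_complex {1..n} \<Delta>"
    and dim: "\<forall>F\<in>\<Delta>. int (card F) - 1 \<le> int n - 3"
    and face: "\<sigma> \<in> \<Delta>"
    and inL: "USub {1..n} ({1..n} - \<sigma>) \<in> int_lattice {1..n} \<Delta>"
  shows "rev_incl_iso
           {X \<in> int_lattice {1..n} \<Delta>. USub {1..n} ({1..n} - \<sigma>) \<subseteq> X}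
           (int_lattice ({1..n} - \<sigma>) (link \<Delta> \<sigma>))"
proof -
  define V where "V = {1..n}"
  define \<B> where "\<B> = (\<lambda>F. V - F) ` {F \<in> facets \<Delta>. \<sigma> \<subseteq> F}"
  have "V - F \<subseteq> V \<and> 2 \<le> card (V - F)" if "F \<in> \<Delta>" for F
  proof -
    have "F \<subseteq> V"
      using cx that by (simp add: V_def simplicial_complex_def)
    then have "card (V - F) = n - card F"
      by (simp add: V_def card_Diff_subset finite_subset)
    then show ?thesis
      using dim that by auto
  qed
  then have blocks: "B \<subseteq> V \<and> 2 \<le> card B" if "B \<in> (\<lambda>F. V - F) ` facets \<Delta>" for B
    using that by (auto simp: facets_def)
  have "\<sigma> \<subseteq> V"
    using cx face by (simp add: V_def simplicial_complex_def)
  then have "{B \<in> (\<lambda>F. V - F) ` facets \<Delta>. B \<subseteq> V - \<sigma>} = \<B>"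
    by (auto simp: \<B>_def)
  then have "{X \<in> int_lattice V \<Delta>. USub V (V - \<sigma>) \<subseteq> X} = diag_subspace V ` Pow \<B>"
    using diag_subspace_above_USub[OF blocks] by (simp add: int_lattice_eq_diag_subspace)
  moreover have "int_lattice (V - \<sigma>) (link \<Delta> \<sigma>) = diag_subspace (V - \<sigma>) ` Pow \<B>"
    using blocks_facets_link[OF cx[folded V_def]] by (simp add: int_lattice_eq_diag_subspace \<B>_def)
  moreover have "\<Union>\<B> \<subseteq> V - \<sigma>"
    by (auto simp: \<B>_def)
  ultimately show ?thesis
    using rev_incl_iso_diag_subspace_restrict[of "V - \<sigma>" V \<B>] by (simp add: V_def)
qed

end
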